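(* Let $G$ be a graph with a correspondence-cover $(L,H)$, and let $T$ be an induced subgraph of $G$ such that: (i) every vertex of $T$ has at most one neighbor outside $T$; (ii) $2\leq |L(u)|\leq |L(v)|$ for every $u\in V(T)$ that has a (unique) neighbor $v$ outside $T$; (iii) the restriction of $(L,H)$ to $G\setminus T$ has a fractional packing; (iv) every correspondence-cover $(L_T,H_T)$ of $T$ with $|L_T(u)|=|L(u)|$ for each $u\in V(T)$ having no neighbor outside $T$, and $|L_T(u)|=|L(u)|-1$ for each $u\in V(T)$ having a neighbor outside $T$, has a fractional packing. Then $(L,H)$ has a fractional packing.
   Context: All graphs are finite and simple. $G\setminus T$ is the subgraph induced by the vertices not in $T$. A correspondence-cover of a graph $G$ is a pair $(L,H)$ where $H$ is a graph and $L$ maps each $v\in V(G)$ to a subset $L(v)\subseteq V(H)$ such that: the sets $L(v)$ partition $V(H)$; each $L(v)$ induces a clique in $H$; if $uv\notin E(G)$ there are no edges of $H$ between $L(u)$ and $L(v)$; if $uv\in E(G)$ the edges of $H$ between $L(u)$ and $L(v)$ form a matching. The restriction of $(L,H)$ to an induced subgraph $G_0$ is the cover $(L_0,H_0)$ of $G_0$ with $L_0(v)=L(v)$ for $v\in V(G_0)$ and $H_0=H-\bigcup_{u\notin V(G_0)}L(u)$. An independent transversal of a cover is an independent set of the cover graph containing exactly one vertex of each list. A cover has a fractional packing if there is a probability distribution on its independent transversals $I$ such that $\Pr(x\in I)=1/|L(v)|$ for every vertex $v$ and every $x\in L(v)$ (lists need not have equal sizes). *)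

theory Defs
  imports "HOL-Probability.Probability"
begin

definition simple_graph :: "'v set \<Rightarrow> ('v \<Rightarrow> 'v \<Rightarrow> bool) \<Rightarrow> bool" where
  "simple_graph V E \<longleftrightarrow> finite V \<and>
     (\<forall>u v. E u v \<longrightarrow> u \<in> V \<and> v \<in> V \<and> u \<noteq> v \<and> E v u)"

definition induced_edges :: "('v \<Rightarrow> 'v \<Rightarrow> bool) \<Rightarrow> 'v set \<Rightarrow> 'v \<Rightarrow> 'v \<Rightarrow> bool" where
  "induced_edges E S = (\<lambda>u v. E u v \<and> u \<in> S \<and> v \<in> S)"

definition corr_cover :: "'v set \<Rightarrow> ('v \<Rightarrow> 'v \<Rightarrow> bool) \<Rightarrow> ('v \<Rightarrow> 'c set)
    \<Rightarrow> 'c set \<Rightarrow> ('c \<Rightarrow> 'c \<Rightarrow> bool) \<Rightarrow> bool" where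
  "corr_cover V E L VH EH \<longleftrightarrow>
     simple_graph VH EH \<and>
     (\<forall>v\<in>V. L v \<subseteq> VH) \<and> (\<Union>v\<in>V. L v) = VH \<and>
     (\<forall>u\<in>V. \<forall>v\<in>V. u \<noteq> v \<longrightarrow> L u \<inter> L v = {}) \<and>
     (\<forall>v\<in>V. \<forall>x\<in>L v. \<forall>y\<in>L v. x \<noteq> y \<longrightarrow> EH x y) \<and>
     (\<forall>u\<in>V. \<forall>v\<in>V. u \<noteq> v \<and> \<not> E u v \<longrightarrow> (\<forall>x\<in>L u. \<forall>y\<in>L v. \<not> EH x y)) \<and>
     (\<forall>u\<in>V. \<forall>v\<in>V. E u v \<longrightarrow>
        (\<forall>x\<in>L u. \<forall>y1\<in>L v. \<forall>y2\<in>L v. EH x y1 \<and> EH x y2 \<longrightarrow> y1 = y2) \<and>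
        (\<forall>y\<in>L v. \<forall>x1\<in>L u. \<forall>x2\<in>L u. EH x1 y \<and> EH x2 y \<longrightarrow> x1 = x2))"

definition indep_transversal :: "'v set \<Rightarrow> ('v \<Rightarrow> 'c set) \<Rightarrow> 'c set
    \<Rightarrow> ('c \<Rightarrow> 'c \<Rightarrow> bool) \<Rightarrow> 'c set \<Rightarrow> bool" where
  "indep_transversal V L VH EH I \<longleftrightarrow>
     I \<subseteq> VH \<and> (\<forall>v\<in>V. card (I \<inter> L v) = 1) \<and> (\<forall>x\<in>I. \<forall>y\<in>I. \<not> EH x y)"

definition frac_packing :: "'v set \<Rightarrow> ('v \<Rightarrow> 'c set) \<Rightarrow> 'c set
    \<Rightarrow> ('c \<Rightarrow> 'c \<Rightarrow> bool) \<Rightarrow> bool" where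
  "frac_packing V L VH EH \<longleftrightarrow>
     (\<exists>p :: 'c set pmf. set_pmf p \<subseteq> {I. indep_transversal V L VH EH I} \<and>
        (\<forall>v\<in>V. \<forall>x\<in>L v. measure_pmf.prob p {I. x \<in> I} = 1 / real (card (L v))))"

definition restr_VH :: "'v set \<Rightarrow> ('v \<Rightarrow> 'c set) \<Rightarrow> 'c set \<Rightarrow> 'v set \<Rightarrow> 'c set" where
  "restr_VH V L VH S = VH - (\<Union>u\<in>V - S. L u)"

definition restr_EH :: "'v set \<Rightarrow> ('v \<Rightarrow> 'c set) \<Rightarrow> 'c set \<Rightarrow> ('c \<Rightarrow> 'c \<Rightarrow> bool)
    \<Rightarrow> 'v set \<Rightarrow> 'c \<Rightarrow> 'c \<Rightarrow> bool" where
  "restr_EH V L VH EH S = (\<lambda>x y. EH x y \<and> x \<in> restr_VH V L VH S \<and> y \<in> restr_VH V L VH S)"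

end

theory Submission
  imports Defs
begin

(* Take an independent transversal I0 of G - T from the packing of (iii).  A vertex u of T with
   outer neighbour w sees at most one colour of I0, the one in L w; extend the matching of H between
   L u and L w to an injection (possible as |L u| <= |L w|) and delete from L u the colour mapped
   into I0, or a uniformly random colour if there is none.  A colour of L u is then deleted with
   probability 1/|L w| + (1 - |L u|/|L w|)/|L u| = 1/|L u|.  The reduced lists have the sizes of
   (iv), so their cover of T has a fractional packing; any transversal J of it avoids the neighbours
   of I0, and in I0 \<union> J a colour of L u survives with probability
   (1 - 1/|L u|)/(|L u| - 1) = 1/|L u|. *)

lemma prob_bind_pmf:
  "measure_pmf.prob (bind_pmf M N) X = (\<integral>x. measure_pmf.prob (N x) X \<partial>M)"
proof -
  have "ennreal (measure_pmf.prob (bind_pmf M N) X) = emeasure (bind_pmf M N) X"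
    by (simp add: measure_pmf.emeasure_eq_measure)
  also have "\<dots> = (\<integral>\<^sup>+x. emeasure (N x) X \<partial>M)"
    by (rule emeasure_bind_pmf)
  also have "\<dots> = (\<integral>\<^sup>+x. ennreal (measure_pmf.prob (N x) X) \<partial>M)"
    by (simp add: measure_pmf.emeasure_eq_measure)
  also have "\<dots> = ennreal (\<integral>x. measure_pmf.prob (N x) X \<partial>M)"
    by (rule nn_integral_eq_integral) (auto intro!: measure_pmf.integrable_const_bound[where B=1])
  finally show ?thesis by (simp add: integral_nonneg)
qed

lemma integral_cong_pmf:
  "(\<And>x. x \<in> set_pmf M \<Longrightarrow> f x = g x) \<Longrightarrow> (\<integral>x. f x \<partial>M) = (\<integral>x. g x \<partial>M)"
  by (intro integral_cong_AE) (auto intro: AE_pmfI)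

lemma
  assumes "corr_cover V E L VH EH"
  shows corr_cover_simple_graph: "simple_graph VH EH"
    and corr_cover_list_subset: "v \<in> V \<Longrightarrow> L v \<subseteq> VH"
    and corr_cover_lists_Union: "(\<Union>v\<in>V. L v) = VH"
    and corr_cover_lists_disjoint: "u \<in> V \<Longrightarrow> v \<in> V \<Longrightarrow> u \<noteq> v \<Longrightarrow> L u \<inter> L v = {}"
    and corr_cover_list_clique: "v \<in> V \<Longrightarrow> x \<in> L v \<Longrightarrow> y \<in> L v \<Longrightarrow> x \<noteq> y \<Longrightarrow> EH x y"
    and corr_cover_nonadjacent: "u \<in> V \<Longrightarrow> v \<in> V \<Longrightarrow> u \<noteq> v \<Longrightarrow> \<not> E u v \<Longrightarrow>
                                   x \<in> L u \<Longrightarrow> y \<in> L v \<Longrightarrow> \<not> EH x y"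
    and corr_cover_matching: "u \<in> V \<Longrightarrow> v \<in> V \<Longrightarrow> E u v \<Longrightarrow>
          \<forall>x\<in>L u. \<forall>y1\<in>L v. \<forall>y2\<in>L v. EH x y1 \<and> EH x y2 \<longrightarrow> y1 = y2"
          "u \<in> V \<Longrightarrow> v \<in> V \<Longrightarrow> E u v \<Longrightarrow>
          \<forall>y\<in>L v. \<forall>x1\<in>L u. \<forall>x2\<in>L u. EH x1 y \<and> EH x2 y \<longrightarrow> x1 = x2"
  using assms unfolding corr_cover_def by simp_all

lemma corr_cover_finite_list:
  "corr_cover V E L VH EH \<Longrightarrow> v \<in> V \<Longrightarrow> finite (L v)"
  using corr_cover_simple_graph[THEN simple_graph_def[THEN iffD1]] corr_cover_list_subset
  by (metis finite_subset)

lemma corr_cover_induced_sublists: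
  assumes cover: "corr_cover V E L VH EH" and S: "S \<subseteq> V" and sub: "\<forall>u\<in>S. L' u \<subseteq> L u"
  defines "VH' \<equiv> \<Union>u\<in>S. L' u"
  shows "corr_cover S (induced_edges E S) L' VH' (\<lambda>x y. EH x y \<and> x \<in> VH' \<and> y \<in> VH')"
proof -
  note H = corr_cover_simple_graph[OF cover, unfolded simple_graph_def]
  have "VH' \<subseteq> VH"
    using S sub corr_cover_list_subset[OF cover] unfolding VH'_def by blast
  then have fin: "finite VH'"
    using H finite_subset by blast
  have clique: "\<forall>v\<in>S. \<forall>x\<in>L' v. \<forall>y\<in>L' v. x \<noteq> y \<longrightarrow> EH x y"
    using S sub corr_cover_list_clique[OF cover] by blast
  have disjoint: "\<forall>u\<in>S. \<forall>v\<in>S. u \<noteq> v \<longrightarrow> L' u \<inter> L' v = {}"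
    using S sub corr_cover_lists_disjoint[OF cover] by blast
  have nonadjacent: "\<forall>u\<in>S. \<forall>v\<in>S. u \<noteq> v \<and> \<not> induced_edges E S u v \<longrightarrow> (\<forall>x\<in>L' u. \<forall>y\<in>L' v. \<not> EH x y)"
  proof (intro ballI impI)
    fix u v x y assume "u \<in> S" "v \<in> S" "u \<noteq> v \<and> \<not> induced_edges E S u v" "x \<in> L' u" "y \<in> L' v"
    then show "\<not> EH x y"
      using S sub corr_cover_nonadjacent[OF cover, of u v x y] unfolding induced_edges_def by blast
  qed
  have matching: "\<forall>u\<in>S. \<forall>v\<in>S. induced_edges E S u v \<longrightarrow>
        (\<forall>x\<in>L' u. \<forall>y1\<in>L' v. \<forall>y2\<in>L' v. EH x y1 \<and> EH x y2 \<longrightarrow> y1 = y2) \<and>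
        (\<forall>y\<in>L' v. \<forall>x1\<in>L' u. \<forall>x2\<in>L' u. EH x1 y \<and> EH x2 y \<longrightarrow> x1 = x2)"
  proof (intro ballI impI)
    fix u v assume uv: "u \<in> S" "v \<in> S" "induced_edges E S u v"
    then have "u \<in> V" "v \<in> V" "E u v"
      using S unfolding induced_edges_def by auto
    note m = corr_cover_matching[OF cover this]
    have "L' u \<subseteq> L u" "L' v \<subseteq> L v"
      using uv sub by auto
    then show "(\<forall>x\<in>L' u. \<forall>y1\<in>L' v. \<forall>y2\<in>L' v. EH x y1 \<and> EH x y2 \<longrightarrow> y1 = y2) \<and>
        (\<forall>y\<in>L' v. \<forall>x1\<in>L' u. \<forall>x2\<in>L' u. EH x1 y \<and> EH x2 y \<longrightarrow> x1 = x2)"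
      using m by (meson subsetD)
  qed
  show ?thesis
    unfolding corr_cover_def
  proof (intro conjI)
    show "simple_graph VH' (\<lambda>x y. EH x y \<and> x \<in> VH' \<and> y \<in> VH')"
      using fin H unfolding simple_graph_def by blast
  qed (use clique disjoint nonadjacent matching in \<open>auto simp: VH'_def\<close>)
qed

lemma corr_cover_image:
  assumes cover: "corr_cover V E L VH EH" and inj: "inj_on f VH"
  defines "EH' \<equiv> \<lambda>a b. \<exists>x y. EH x y \<and> a = f x \<and> b = f y"
  shows "corr_cover V E (\<lambda>v. f ` L v) (f ` VH) EH'"
proof -
  note H = corr_cover_simple_graph[OF cover, unfolded simple_graph_def]
  note sub = corr_cover_list_subset[OF cover]
  have EH'_iff: "EH' (f x) (f y) \<longleftrightarrow> EH x y" if "x \<in> VH" "y \<in> VH" for x y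
    using that H inj unfolding EH'_def by (metis inj_onD)
  have "simple_graph (f ` VH) EH'"
    unfolding simple_graph_def EH'_def using H inj by (auto dest: inj_onD) blast
  moreover have "\<forall>u\<in>V. \<forall>v\<in>V. u \<noteq> v \<longrightarrow> f ` L u \<inter> f ` L v = {}"
    using sub corr_cover_lists_disjoint[OF cover] inj_on_image_Int[OF inj] by (metis image_empty)
  moreover have "\<forall>v\<in>V. \<forall>a\<in>f ` L v. \<forall>b\<in>f ` L v. a \<noteq> b \<longrightarrow> EH' a b"
    using corr_cover_list_clique[OF cover] unfolding EH'_def by blast
  moreover have "\<forall>u\<in>V. \<forall>v\<in>V. u \<noteq> v \<and> \<not> E u v \<longrightarrow> (\<forall>a\<in>f ` L u. \<forall>b\<in>f ` L v. \<not> EH' a b)"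
    using sub corr_cover_nonadjacent[OF cover] EH'_iff by (smt (verit) image_iff subsetD)
  moreover have "\<forall>u\<in>V. \<forall>v\<in>V. E u v \<longrightarrow>
        (\<forall>a\<in>f ` L u. \<forall>b1\<in>f ` L v. \<forall>b2\<in>f ` L v. EH' a b1 \<and> EH' a b2 \<longrightarrow> b1 = b2) \<and>
        (\<forall>b\<in>f ` L v. \<forall>a1\<in>f ` L u. \<forall>a2\<in>f ` L u. EH' a1 b \<and> EH' a2 b \<longrightarrow> a1 = a2)"
  proof (intro ballI impI)
    fix u v assume uv: "u \<in> V" "v \<in> V" "E u v"
    note m = corr_cover_matching[OF cover uv]
    have "\<forall>a\<in>f ` L u. \<forall>b1\<in>f ` L v. \<forall>b2\<in>f ` L v. EH' a b1 \<and> EH' a b2 \<longrightarrow> b1 = b2"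
      using m(1) sub[OF uv(1)] sub[OF uv(2)] EH'_iff by (smt (verit) image_iff subsetD)
    moreover have "\<forall>b\<in>f ` L v. \<forall>a1\<in>f ` L u. \<forall>a2\<in>f ` L u. EH' a1 b \<and> EH' a2 b \<longrightarrow> a1 = a2"
      using m(2) sub[OF uv(1)] sub[OF uv(2)] EH'_iff by (smt (verit) image_iff subsetD)
    ultimately show "(\<forall>a\<in>f ` L u. \<forall>b1\<in>f ` L v. \<forall>b2\<in>f ` L v. EH' a b1 \<and> EH' a b2 \<longrightarrow> b1 = b2) \<and>
        (\<forall>b\<in>f ` L v. \<forall>a1\<in>f ` L u. \<forall>a2\<in>f ` L u. EH' a1 b \<and> EH' a2 b \<longrightarrow> a1 = a2)" ..
  qed
  ultimately show ?thesis
    unfolding corr_cover_def using sub corr_cover_lists_Union[OF cover] by auto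
qed

lemma frac_packing_of_image:
  assumes cover: "corr_cover V E L VH EH" and inj: "inj_on f VH"
    and packing: "frac_packing V (\<lambda>v. f ` L v) (f ` VH) (\<lambda>a b. \<exists>x y. EH x y \<and> a = f x \<and> b = f y)"
  shows "frac_packing V L VH EH"
proof -
  note sub = corr_cover_list_subset[OF cover]
  obtain q where q_set: "set_pmf q \<subseteq> {J. indep_transversal V (\<lambda>v. f ` L v) (f ` VH)
                                        (\<lambda>a b. \<exists>x y. EH x y \<and> a = f x \<and> b = f y) J}"
    and q_prob: "\<forall>v\<in>V. \<forall>a\<in>f ` L v. measure_pmf.prob q {J. a \<in> J} = 1 / real (card (f ` L v))"
    using packing unfolding frac_packing_def by blast
  define preimage where "preimage J = {x \<in> VH. f x \<in> J}" for J
  have "indep_transversal V L VH EH (preimage J)" if "J \<in> set_pmf q" for J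
  proof -
    have J: "indep_transversal V (\<lambda>v. f ` L v) (f ` VH) (\<lambda>a b. \<exists>x y. EH x y \<and> a = f x \<and> b = f y) J"
      using that q_set by blast
    have "card (preimage J \<inter> L v) = 1" if v: "v \<in> V" for v
    proof -
      have "f ` (preimage J \<inter> L v) = J \<inter> f ` L v"
        using sub[OF v] unfolding preimage_def by blast
      moreover have "inj_on f (preimage J \<inter> L v)"
        using inj unfolding preimage_def by (rule inj_on_subset) blast
      ultimately show ?thesis
        using J v unfolding indep_transversal_def by (metis card_image)
    qed
    then show ?thesis
      using J unfolding indep_transversal_def preimage_def by blast
  qed
  moreover have "measure_pmf.prob (map_pmf preimage q) {I. x \<in> I} = 1 / real (card (L v))"
    if "v \<in> V" "x \<in> L v" for v x
  proof -
    have "preimage -` {I. x \<in> I} = {J. f x \<in> J}"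
      using that sub unfolding preimage_def by blast
    moreover have "card (f ` L v) = card (L v)"
      using that sub inj by (meson card_image inj_on_subset)
    ultimately show ?thesis
      using q_prob that by simp
  qed
  ultimately show ?thesis
    unfolding frac_packing_def by (intro exI[of _ "map_pmf preimage q"]) auto
qed

lemma matching_extends_to_inj_on:
  assumes "finite A" "finite B" "card A \<le> card B"
    and match_A: "\<forall>x\<in>A. \<forall>y1\<in>B. \<forall>y2\<in>B. R x y1 \<and> R x y2 \<longrightarrow> y1 = y2"
    and match_B: "\<forall>y\<in>B. \<forall>x1\<in>A. \<forall>x2\<in>A. R x1 y \<and> R x2 y \<longrightarrow> x1 = x2"
  shows "\<exists>\<psi>. inj_on \<psi> A \<and> \<psi> ` A \<subseteq> B \<and> (\<forall>x\<in>A. \<forall>y\<in>B. R x y \<longrightarrow> \<psi> x = y)"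
proof -
  define A1 where "A1 = {x\<in>A. \<exists>y\<in>B. R x y}"
  define m where "m x = (THE y. y \<in> B \<and> R x y)" for x
  have m: "m x \<in> B \<and> R x (m x)" if x: "x \<in> A1" for x
  proof -
    obtain y where y: "y \<in> B" "R x y"
      using x unfolding A1_def by auto
    have "m x = y"
      unfolding m_def by (rule the_equality) (use y match_A x A1_def in auto)
    then show ?thesis
      using y by simp
  qed
  have inj_m: "inj_on m A1"
    by (rule inj_onI) (metis (mono_tags, lifting) A1_def match_B mem_Collect_eq m)
  have "card (A - A1) = card A - card A1"
    using assms unfolding A1_def by (simp add: card_Diff_subset)
  moreover have "card (B - m ` A1) = card B - card A1"
    using m inj_m assms by (subst card_Diff_subset) (auto simp: card_image A1_def)
  ultimately have "card (A - A1) \<le> card (B - m ` A1)"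
    using assms(3) by simp
  then obtain g where g: "g ` (A - A1) \<subseteq> B - m ` A1" "inj_on g (A - A1)"
    using card_le_inj[of "A - A1" "B - m ` A1"] assms by auto
  define \<psi> where "\<psi> x = (if x \<in> A1 then m x else g x)" for x
  have "inj_on \<psi> (A1 \<union> (A - A1))"
    unfolding inj_on_Un
  proof (intro conjI)
    show "inj_on \<psi> A1"
      using inj_m by (simp add: inj_on_def \<psi>_def)
    show "inj_on \<psi> (A - A1)"
      using g(2) by (simp add: inj_on_def \<psi>_def)
    show "\<psi> ` (A1 - (A - A1)) \<inter> \<psi> ` (A - A1 - A1) = {}"
      using g(1) by (auto simp: \<psi>_def)
  qed
  moreover have "\<psi> ` A \<subseteq> B"
    using g m unfolding \<psi>_def by auto
  moreover have "\<forall>x\<in>A. \<forall>y\<in>B. R x y \<longrightarrow> \<psi> x = y"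
    using m match_A unfolding \<psi>_def A1_def by auto
  moreover have "A1 \<union> (A - A1) = A"
    unfolding A1_def by blast
  ultimately show ?thesis
    by metis
qed

lemma frac_packing_by_nat_encoding:
  fixes L :: "'v \<Rightarrow> 'c set"
  assumes cover: "corr_cover V E L VH EH"
    and nat_packing: "\<And>(L' :: 'v \<Rightarrow> nat set) VH' EH'. corr_cover V E L' VH' EH' \<Longrightarrow>
                        \<forall>v\<in>V. card (L' v) = card (L v) \<Longrightarrow> frac_packing V L' VH' EH'"
  shows "frac_packing V L VH EH"
proof -
  obtain enc :: "'c \<Rightarrow> nat" where enc: "inj_on enc VH"
    using corr_cover_simple_graph[OF cover] finite_imp_inj_to_nat_seg
    unfolding simple_graph_def by metis
  have "\<forall>v\<in>V. card (enc ` L v) = card (L v)"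
    using enc corr_cover_list_subset[OF cover] by (meson card_image inj_on_subset)
  then have "frac_packing V (\<lambda>v. enc ` L v) (enc ` VH) (\<lambda>a b. \<exists>x y. EH x y \<and> a = enc x \<and> b = enc y)"
    by (rule nat_packing[OF corr_cover_image[OF cover enc]])
  then show ?thesis
    by (rule frac_packing_of_image[OF cover enc])
qed

locale boundary_setting =
  fixes V :: "'v set" and E :: "'v \<Rightarrow> 'v \<Rightarrow> bool"
    and L :: "'v \<Rightarrow> 'c set" and VH :: "'c set" and EH :: "'c \<Rightarrow> 'c \<Rightarrow> bool"
    and T :: "'v set"
  assumes graph: "simple_graph V E"
    and cover: "corr_cover V E L VH EH"
    and T_subset: "T \<subseteq> V"
    and at_most_one_outer_nbr: "\<forall>u\<in>T. card {v \<in> V - T. E u v} \<le> 1"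
    and list_sizes: "\<forall>u\<in>T. \<forall>v\<in>V - T. E u v \<longrightarrow> 2 \<le> card (L u) \<and> card (L u) \<le> card (L v)"
begin

lemma finite_V: "finite V"
  using graph unfolding simple_graph_def by blast

definition boundary :: "'v set" where
  "boundary = {u \<in> T. \<exists>v\<in>V - T. E u v}"

definition outer_nbr :: "'v \<Rightarrow> 'v" where
  "outer_nbr u = (THE v. v \<in> V - T \<and> E u v)"

lemma outer_nbr_eq:
  assumes "u \<in> T" "v \<in> V - T" "E u v"
  shows "outer_nbr u = v"
proof -
  have "finite {v \<in> V - T. E u v}"
    using finite_V by auto
  then have "\<forall>w\<in>{v \<in> V - T. E u v}. \<forall>w'\<in>{v \<in> V - T. E u v}. w = w'"
    using at_most_one_outer_nbr assms(1) card_le_Suc0_iff_eq by auto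
  then show ?thesis
    unfolding outer_nbr_def using assms by (intro the_equality) auto
qed

lemma outer_nbr:
  assumes "u \<in> boundary"
  shows "outer_nbr u \<in> V - T" "E u (outer_nbr u)"
  using assms outer_nbr_eq unfolding boundary_def by auto

lemma boundary_list_sizes:
  assumes "u \<in> boundary"
  shows "2 \<le> card (L u)" "card (L u) \<le> card (L (outer_nbr u))"
  using assms outer_nbr[OF assms] list_sizes unfolding boundary_def by auto

definition partner :: "'v \<Rightarrow> 'c \<Rightarrow> 'c" where
  "partner u = (SOME \<psi>. inj_on \<psi> (L u) \<and> \<psi> ` L u \<subseteq> L (outer_nbr u) \<and>
                        (\<forall>x\<in>L u. \<forall>y\<in>L (outer_nbr u). EH x y \<longrightarrow> \<psi> x = y))"

lemma partner:
  assumes "u \<in> boundary"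
  shows "inj_on (partner u) (L u)" "partner u ` L u \<subseteq> L (outer_nbr u)"
    and "x \<in> L u \<Longrightarrow> y \<in> L (outer_nbr u) \<Longrightarrow> EH x y \<Longrightarrow> partner u x = y"
proof -
  have "u \<in> V" "outer_nbr u \<in> V" "E u (outer_nbr u)"
    using assms outer_nbr T_subset unfolding boundary_def by auto
  then have "\<exists>\<psi>. inj_on \<psi> (L u) \<and> \<psi> ` L u \<subseteq> L (outer_nbr u) \<and>
                 (\<forall>x\<in>L u. \<forall>y\<in>L (outer_nbr u). EH x y \<longrightarrow> \<psi> x = y)"
    using boundary_list_sizes[OF assms] corr_cover_finite_list[OF cover]
      corr_cover_matching[OF cover] by (intro matching_extends_to_inj_on) auto
  from someI_ex[OF this] show "inj_on (partner u) (L u)" "partner u ` L u \<subseteq> L (outer_nbr u)"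
    and "x \<in> L u \<Longrightarrow> y \<in> L (outer_nbr u) \<Longrightarrow> EH x y \<Longrightarrow> partner u x = y"
    unfolding partner_def by blast+
qed

definition reduced_lists :: "('v \<Rightarrow> 'c) \<Rightarrow> 'v \<Rightarrow> 'c set" where
  "reduced_lists C u = (if u \<in> boundary then L u - {C u} else L u)"

definition reduced_VH :: "('v \<Rightarrow> 'c) \<Rightarrow> 'c set" where
  "reduced_VH C = (\<Union>u\<in>T. reduced_lists C u)"

definition reduced_EH :: "('v \<Rightarrow> 'c) \<Rightarrow> 'c \<Rightarrow> 'c \<Rightarrow> bool" where
  "reduced_EH C x y \<longleftrightarrow> EH x y \<and> x \<in> reduced_VH C \<and> y \<in> reduced_VH C"

lemma corr_cover_reduced:
  "corr_cover T (induced_edges E T) (reduced_lists C) (reduced_VH C) (reduced_EH C)"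
  unfolding reduced_EH_def[abs_def] reduced_VH_def
  by (rule corr_cover_induced_sublists[OF cover T_subset]) (auto simp: reduced_lists_def)

lemma card_reduced_lists:
  assumes "u \<in> T" "u \<in> boundary \<Longrightarrow> C u \<in> L u"
  shows "card (reduced_lists C u) = (if u \<in> boundary then card (L u) - 1 else card (L u))"
  using assms corr_cover_finite_list[OF cover] T_subset unfolding reduced_lists_def by auto

lemma reduced_lists_subset: "reduced_lists C u \<subseteq> L u"
  unfolding reduced_lists_def by auto

lemma reduced_VH_subset: "reduced_VH C \<subseteq> VH"
  using reduced_lists_subset corr_cover_list_subset[OF cover] T_subset
  unfolding reduced_VH_def by blast

lemma Int_list_reduced:
  assumes "J \<subseteq> reduced_VH C" "u \<in> V"
  shows "J \<inter> L u = (if u \<in> T then J \<inter> reduced_lists C u else {})"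
proof -
  have "J \<inter> L u \<subseteq> reduced_lists C u" if "u \<in> T"
    using assms that corr_cover_lists_disjoint[OF cover] T_subset
    unfolding reduced_VH_def reduced_lists_def by (fastforce split: if_splits)
  moreover have "J \<inter> L u = {}" if "u \<notin> T"
    using assms that corr_cover_lists_disjoint[OF cover] T_subset
    unfolding reduced_VH_def reduced_lists_def by (fastforce split: if_splits)
  ultimately show ?thesis
    unfolding reduced_lists_def by auto
qed

end

locale boundary_extension = boundary_setting V E L VH EH T
  for V :: "'v set" and E and L :: "'v \<Rightarrow> 'c set" and VH EH T +
  fixes p0 :: "'c set pmf" and q :: "('v \<Rightarrow> 'c) \<Rightarrow> 'c set pmf"
  assumes p0_set: "set_pmf p0 \<subseteq>
      {I. indep_transversal (V - T) L (restr_VH V L VH (V - T)) (restr_EH V L VH EH (V - T)) I}"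
    and p0_prob: "v \<in> V - T \<Longrightarrow> x \<in> L v \<Longrightarrow> measure_pmf.prob p0 {I. x \<in> I} = 1 / real (card (L v))"
    and q_set: "\<forall>u\<in>boundary. C u \<in> L u \<Longrightarrow>
      set_pmf (q C) \<subseteq> {J. indep_transversal T (reduced_lists C) (reduced_VH C) (reduced_EH C) J}"
    and q_prob: "\<forall>u\<in>boundary. C u \<in> L u \<Longrightarrow> u \<in> T \<Longrightarrow> x \<in> reduced_lists C u \<Longrightarrow>
      measure_pmf.prob (q C) {J. x \<in> J} = 1 / real (card (reduced_lists C u))"
begin

lemma outer_transversal:
  assumes "I0 \<in> set_pmf p0"
  shows "I0 \<subseteq> VH" "u \<in> T \<Longrightarrow> I0 \<inter> L u = {}" "v \<in> V - T \<Longrightarrow> card (I0 \<inter> L v) = 1"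
    and "x \<in> I0 \<Longrightarrow> y \<in> I0 \<Longrightarrow> \<not> EH x y"
proof -
  have "V - (V - T) = T"
    using T_subset by auto
  moreover have tr: "indep_transversal (V - T) L (restr_VH V L VH (V - T)) (restr_EH V L VH EH (V - T)) I0"
    using assms p0_set by auto
  ultimately have sub: "I0 \<subseteq> VH - (\<Union>u\<in>T. L u)"
    unfolding indep_transversal_def restr_VH_def by auto
  then show "I0 \<subseteq> VH" "u \<in> T \<Longrightarrow> I0 \<inter> L u = {}"
    by auto
  show "v \<in> V - T \<Longrightarrow> card (I0 \<inter> L v) = 1"
    using tr unfolding indep_transversal_def by auto
  show "x \<in> I0 \<Longrightarrow> y \<in> I0 \<Longrightarrow> \<not> EH x y"
    using tr sub unfolding indep_transversal_def restr_EH_def restr_VH_def by blast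
qed

lemma finite_set_p0: "finite (set_pmf p0)"
proof (rule finite_subset)
  show "set_pmf p0 \<subseteq> Pow VH"
    using outer_transversal(1) by blast
  show "finite (Pow VH)"
    using corr_cover_simple_graph[OF cover] unfolding simple_graph_def by simp
qed

definition blocked :: "'c set \<Rightarrow> 'v \<Rightarrow> 'c set" where
  "blocked I0 u = {y \<in> L u. partner u y \<in> I0}"

lemma blocked_unique:
  assumes "I0 \<in> set_pmf p0" "u \<in> boundary" "y \<in> blocked I0 u" "y' \<in> blocked I0 u"
  shows "y = y'"
proof -
  obtain z where "I0 \<inter> L (outer_nbr u) = {z}"
    using outer_transversal(3)[OF assms(1) outer_nbr(1)[OF assms(2)]] card_1_singletonE by blast
  moreover have "partner u w \<in> I0 \<inter> L (outer_nbr u)" if "w \<in> blocked I0 u" for w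
    using that partner(2)[OF assms(2)] unfolding blocked_def by auto
  ultimately have "partner u y = partner u y'"
    using assms(3,4) by (metis singletonD)
  then show ?thesis
    using assms(3,4) partner(1)[OF assms(2)] unfolding blocked_def by (auto dest: inj_onD)
qed

definition deleted :: "'c set \<Rightarrow> ('v \<Rightarrow> 'c) \<Rightarrow> 'v \<Rightarrow> 'c" where
  "deleted I0 R u = (if blocked I0 u = {} then R u else the_elem (blocked I0 u))"

lemma deleted_blocked:
  assumes "I0 \<in> set_pmf p0" "u \<in> boundary" "y \<in> blocked I0 u"
  shows "deleted I0 R u = y"
proof -
  have "blocked I0 u = {y}"
    using blocked_unique[OF assms(1,2)] assms(3) by blast
  then show ?thesis
    unfolding deleted_def by simp
qed

definition random_colours :: "('v \<Rightarrow> 'c) pmf" where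
  "random_colours = Pi_pmf boundary undefined (\<lambda>u. pmf_of_set (L u))"

lemma finite_boundary: "finite boundary"
  using finite_V T_subset unfolding boundary_def by (auto intro: finite_subset)

lemma boundary_list_finite_nonempty:
  assumes "u \<in> boundary"
  shows "L u \<noteq> {}" "finite (L u)"
  using boundary_list_sizes(1)[OF assms] by (auto intro: card_ge_0_finite)

lemma random_colour_uniform:
  "u \<in> boundary \<Longrightarrow> map_pmf (\<lambda>R. R u) random_colours = pmf_of_set (L u)"
  unfolding random_colours_def by (simp add: Pi_pmf_component[OF finite_boundary])

lemma random_colour_in_list:
  assumes "R \<in> set_pmf random_colours" "u \<in> boundary"
  shows "R u \<in> L u"
proof -
  have "R u \<in> set_pmf (map_pmf (\<lambda>R. R u) random_colours)"
    using assms(1) by simp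
  then show ?thesis
    using random_colour_uniform[OF assms(2)] boundary_list_finite_nonempty[OF assms(2)] by simp
qed

definition choice_pmf :: "('c set \<times> ('v \<Rightarrow> 'c)) pmf" where
  "choice_pmf = p0 \<bind> (\<lambda>I0. map_pmf (\<lambda>R. (I0, deleted I0 R)) random_colours)"

lemma set_choice_pmf:
  assumes "(I0, C) \<in> set_pmf choice_pmf"
  shows "I0 \<in> set_pmf p0" "\<forall>u\<in>boundary. C u \<in> L u"
    and "u \<in> boundary \<Longrightarrow> y \<in> blocked I0 u \<Longrightarrow> C u = y"
proof -
  obtain R where R: "I0 \<in> set_pmf p0" "R \<in> set_pmf random_colours" "C = deleted I0 R"
    using assms unfolding choice_pmf_def by auto
  then show "I0 \<in> set_pmf p0" "u \<in> boundary \<Longrightarrow> y \<in> blocked I0 u \<Longrightarrow> C u = y"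
    using deleted_blocked by auto
  show "\<forall>u\<in>boundary. C u \<in> L u"
  proof
    fix u assume u: "u \<in> boundary"
    show "C u \<in> L u"
    proof (cases "blocked I0 u = {}")
      case True
      then show ?thesis
        using R random_colour_in_list[OF R(2) u] unfolding deleted_def by simp
    next
      case False
      then obtain y where "y \<in> blocked I0 u"
        by blast
      then show ?thesis
        using R deleted_blocked[OF R(1) u] unfolding blocked_def by auto
    qed
  qed
qed

lemma map_fst_choice_pmf: "map_pmf fst choice_pmf = p0"
  unfolding choice_pmf_def map_bind_pmf by (simp add: map_pmf_comp bind_return_pmf' map_pmf_def[symmetric])

lemma prob_deleted_given:
  assumes I0: "I0 \<in> set_pmf p0" and v: "v \<in> boundary" and x: "x \<in> L v"
  shows "measure_pmf.prob random_colours {R. deleted I0 R v = x}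
    = indicator {I. partner v x \<in> I} I0
      + (1 - (\<Sum>y\<in>L v. indicator {I. partner v y \<in> I} I0)) / real (card (L v))"
proof (cases "blocked I0 v = {}")
  case True
  then have "indicator {I. partner v y \<in> I} I0 = (0::real)" if "y \<in> L v" for y
    using that unfolding blocked_def by auto
  moreover have "measure_pmf.prob random_colours {R. deleted I0 R v = x}
      = measure_pmf.prob (map_pmf (\<lambda>R. R v) random_colours) {x}"
    using True unfolding deleted_def by (simp add: vimage_def)
  ultimately show ?thesis
    using random_colour_uniform[OF v] x boundary_list_finite_nonempty[OF v]
    by (simp add: measure_pmf_of_set[OF boundary_list_finite_nonempty[OF v]])
next
  case False
  then obtain y0 where y0: "y0 \<in> blocked I0 v"
    by blast
  have "indicator {I. partner v y \<in> I} I0 = (if y = y0 then 1 else 0 :: real)" if y: "y \<in> L v" for y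
  proof -
    have "y \<in> blocked I0 v \<longleftrightarrow> y = y0"
      using blocked_unique[OF I0 v y0] y0 by blast
    then show ?thesis
      using y unfolding blocked_def by (simp add: indicator_def)
  qed
  then have "(\<Sum>y\<in>L v. indicator {I. partner v y \<in> I} I0) = (1::real)"
    "indicator {I. partner v x \<in> I} I0 = (if x = y0 then 1 else 0 :: real)"
    using y0 x boundary_list_finite_nonempty(2)[OF v] unfolding blocked_def by (simp_all add: sum.delta)
  moreover have "{R. deleted I0 R v = x} = (if y0 = x then UNIV else {})"
    using deleted_blocked[OF I0 v y0] by auto
  ultimately show ?thesis
    by simp
qed

lemma prob_deleted_colour:
  assumes v: "v \<in> boundary" and x: "x \<in> L v"
  shows "measure_pmf.prob choice_pmf {(I0, C). C v = x} = 1 / real (card (L v))"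
proof -
  define a where "a = real (card (L v))"
  define b where "b = real (card (L (outer_nbr v)))"
  have ab: "2 \<le> a" "a \<le> b"
    using boundary_list_sizes[OF v] unfolding a_def b_def by auto
  have integrable: "integrable p0 f" for f :: "'c set \<Rightarrow> real"
    by (rule integrable_measure_pmf_finite[OF finite_set_p0])
  have hit: "measure_pmf.prob p0 {I. partner v y \<in> I} = 1 / b" if "y \<in> L v" for y
    using p0_prob[OF outer_nbr(1)[OF v]] partner(2)[OF v] that unfolding b_def by blast
  have "measure_pmf.prob choice_pmf {(I0, C). C v = x}
      = (\<integral>I0. measure_pmf.prob random_colours {R. deleted I0 R v = x} \<partial>p0)"
    unfolding choice_pmf_def prob_bind_pmf by (simp add: vimage_def)
  also have "\<dots> = (\<integral>I0. indicator {I. partner v x \<in> I} I0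
                    + (1 - (\<Sum>y\<in>L v. indicator {I. partner v y \<in> I} I0)) / a \<partial>p0)"
    unfolding a_def by (intro integral_cong_pmf prob_deleted_given v x)
  also have "\<dots> = measure_pmf.prob p0 {I. partner v x \<in> I}
                  + (1 - (\<Sum>y\<in>L v. measure_pmf.prob p0 {I. partner v y \<in> I})) / a"
    by (simp add: integrable integral_sum)
  also have "\<dots> = 1 / b + (1 - a / b) / a"
    using hit x by (simp add: a_def)
  also have "\<dots> = 1 / a"
    using ab by (simp add: field_simps)
  finally show ?thesis
    unfolding a_def .
qed

lemma reduced_transversal:
  assumes "\<forall>u\<in>boundary. C u \<in> L u" "J \<in> set_pmf (q C)"
  shows "J \<subseteq> reduced_VH C" "u \<in> T \<Longrightarrow> card (J \<inter> reduced_lists C u) = 1"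
    and "x \<in> J \<Longrightarrow> y \<in> J \<Longrightarrow> \<not> EH x y"
  using q_set[OF assms(1)] assms(2) unfolding indep_transversal_def reduced_EH_def by blast+

lemma prob_reduced_packing:
  assumes C: "\<forall>u\<in>boundary. C u \<in> L u" and v: "v \<in> T" and x: "x \<in> L v"
  shows "measure_pmf.prob (q C) {J. x \<in> J}
           = (if x \<in> reduced_lists C v then 1 / real (card (reduced_lists C v)) else 0)"
proof (cases "x \<in> reduced_lists C v")
  case True
  then show ?thesis
    using q_prob[OF C v] by simp
next
  case False
  have "x \<notin> J" if "J \<in> set_pmf (q C)" for J
    using Int_list_reduced[OF reduced_transversal(1)[OF C that], of v] v x T_subset False by auto
  then show ?thesis
    using False by (auto simp: measure_pmf_zero_iff)
qed

lemma no_edge_to_outer: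
  assumes IC: "(I0, C) \<in> set_pmf choice_pmf" and J: "J \<in> set_pmf (q C)"
    and x: "x \<in> J" and y: "y \<in> I0"
  shows "\<not> EH x y"
proof
  assume e: "EH x y"
  note I0 = set_choice_pmf(1)[OF IC] and C = set_choice_pmf(2)[OF IC]
  obtain u where u: "u \<in> T" "x \<in> reduced_lists C u"
    using reduced_transversal(1)[OF C J] x unfolding reduced_VH_def by blast
  then have xu: "x \<in> L u"
    using reduced_lists_subset by blast
  obtain w where w: "w \<in> V" "y \<in> L w"
    using outer_transversal(1)[OF I0] y corr_cover_lists_Union[OF cover] by blast
  then have wT: "w \<notin> T"
    using outer_transversal(2)[OF I0] y by blast
  have "E u w"
    using corr_cover_nonadjacent[OF cover, of u w x y] u w wT T_subset e xu by blast
  then have ub: "u \<in> boundary" "outer_nbr u = w"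
    using u w wT outer_nbr_eq unfolding boundary_def by auto
  then have "x \<in> blocked I0 u"
    using partner(3)[OF ub(1) xu] w e xu y unfolding blocked_def by simp
  then have "C u = x"
    using set_choice_pmf(3)[OF IC ub(1)] by simp
  then show False
    using u(2) ub(1) unfolding reduced_lists_def by simp
qed

definition extension_pmf :: "'c set pmf" where
  "extension_pmf = choice_pmf \<bind> (\<lambda>(I0, C). map_pmf ((\<union>) I0) (q C))"

lemma extension_transversal:
  assumes "I \<in> set_pmf extension_pmf"
  shows "indep_transversal V L VH EH I"
proof -
  obtain I0 C J where IC: "(I0, C) \<in> set_pmf choice_pmf" and J: "J \<in> set_pmf (q C)"
    and I: "I = I0 \<union> J"
    using assms unfolding extension_pmf_def by auto
  note I0 = set_choice_pmf(1)[OF IC] and C = set_choice_pmf(2)[OF IC]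
  note J_tr = reduced_transversal[OF C J]
  have "J \<subseteq> VH"
    using J_tr(1) reduced_VH_subset by blast
  moreover have "card (I \<inter> L u) = 1" if u: "u \<in> V" for u
  proof (cases "u \<in> T")
    case True
    then have "I \<inter> L u = J \<inter> reduced_lists C u"
      using I outer_transversal(2)[OF I0 True] Int_list_reduced[OF J_tr(1) u] by auto
    then show ?thesis
      using J_tr(2) True by simp
  next
    case False
    then have "I \<inter> L u = I0 \<inter> L u"
      using I Int_list_reduced[OF J_tr(1) u] by auto
    then show ?thesis
      using outer_transversal(3)[OF I0] u False by simp
  qed
  moreover have "\<not> EH x y" if "x \<in> I" "y \<in> I" for x y
    using that I outer_transversal(4)[OF I0] J_tr(3) no_edge_to_outer[OF IC J]
      corr_cover_simple_graph[OF cover] unfolding simple_graph_def by blast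
  ultimately show ?thesis
    using outer_transversal(1)[OF I0] I unfolding indep_transversal_def by auto
qed

lemma prob_extension_eq_integral:
  "measure_pmf.prob extension_pmf {I. x \<in> I}
     = (\<integral>(I0, C). measure_pmf.prob (q C) {J. x \<in> I0 \<union> J} \<partial>choice_pmf)"
  unfolding extension_pmf_def prob_bind_pmf by (simp add: case_prod_beta' vimage_def)

lemma prob_extension_outer:
  assumes v: "v \<in> V - T" and x: "x \<in> L v"
  shows "measure_pmf.prob extension_pmf {I. x \<in> I} = 1 / real (card (L v))"
proof -
  have "measure_pmf.prob (q C) {J. x \<in> I0 \<union> J} = indicator {I. x \<in> I} I0"
    if IC: "(I0, C) \<in> set_pmf choice_pmf" for I0 C
  proof -
    have "x \<notin> J" if "J \<in> set_pmf (q C)" for J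
      using Int_list_reduced[OF reduced_transversal(1)[OF set_choice_pmf(2)[OF IC] that], of v]
        v x by auto
    then show ?thesis
      by (cases "x \<in> I0") (auto simp: measure_pmf_zero_iff)
  qed
  then have "measure_pmf.prob extension_pmf {I. x \<in> I}
      = (\<integral>p. indicator {I. x \<in> I} (fst p) \<partial>choice_pmf)"
    unfolding prob_extension_eq_integral by (intro integral_cong_pmf) auto
  also have "\<dots> = (\<integral>I. indicator {I. x \<in> I} I \<partial>map_pmf fst choice_pmf)"
    by (simp only: integral_map_pmf)
  finally show ?thesis
    using p0_prob v x by (simp add: map_fst_choice_pmf)
qed

lemma prob_reduced_given_choice:
  assumes IC: "(I0, C) \<in> set_pmf choice_pmf" and v: "v \<in> T" and x: "x \<in> L v"
  shows "measure_pmf.prob (q C) {J. x \<in> I0 \<union> J}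
           = (if x \<in> reduced_lists C v then 1 / real (card (reduced_lists C v)) else 0)"
proof -
  have "x \<notin> I0"
    using outer_transversal(2)[OF set_choice_pmf(1)[OF IC] v] x by blast
  then show ?thesis
    using prob_reduced_packing[OF set_choice_pmf(2)[OF IC] v x] by simp
qed

lemma prob_extension_interior:
  assumes v: "v \<in> T - boundary" and x: "x \<in> L v"
  shows "measure_pmf.prob extension_pmf {I. x \<in> I} = 1 / real (card (L v))"
proof -
  have "measure_pmf.prob extension_pmf {I. x \<in> I} = (\<integral>_. 1 / real (card (L v)) \<partial>choice_pmf)"
    unfolding prob_extension_eq_integral
    by (intro integral_cong_pmf) (use prob_reduced_given_choice v x in \<open>auto simp: reduced_lists_def\<close>)
  then show ?thesis
    by simp
qed

lemma prob_extension_boundary: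
  assumes v: "v \<in> boundary" and x: "x \<in> L v"
  shows "measure_pmf.prob extension_pmf {I. x \<in> I} = 1 / real (card (L v))"
proof -
  define a where "a = real (card (L v))"
  have a: "2 \<le> a"
    using boundary_list_sizes(1)[OF v] unfolding a_def by simp
  have vT: "v \<in> T"
    using v unfolding boundary_def by blast
  have "measure_pmf.prob extension_pmf {I. x \<in> I}
      = (\<integral>p. indicator {(I0, C). C v \<noteq> x} p / (a - 1) \<partial>choice_pmf)"
    unfolding prob_extension_eq_integral
  proof (intro integral_cong_pmf, clarify)
    fix I0 C assume IC: "(I0, C) \<in> set_pmf choice_pmf"
    have "card (reduced_lists C v) = card (L v) - 1"
      using card_reduced_lists[OF vT] set_choice_pmf(2)[OF IC] v by simp
    then show "measure_pmf.prob (q C) {J. x \<in> I0 \<union> J}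
        = indicator {(I0, C). C v \<noteq> x} (I0, C) / (a - 1)"
      using prob_reduced_given_choice[OF IC vT x] v x a boundary_list_sizes(1)[OF v]
      unfolding reduced_lists_def a_def by (simp add: of_nat_diff)
  qed
  also have "\<dots> = measure_pmf.prob choice_pmf {(I0, C). C v \<noteq> x} / (a - 1)"
    by simp
  also have "\<dots> = (1 - measure_pmf.prob choice_pmf {(I0, C). C v = x}) / (a - 1)"
  proof -
    have "{(I0, C). C v \<noteq> x} = space choice_pmf - {(I0, C). C v = x}"
      by auto
    then show ?thesis
      using measure_pmf.prob_compl[of "{(I0, C). C v = x}" choice_pmf] by simp
  qed
  also have "\<dots> = 1 / a"
    using prob_deleted_colour[OF v x] a unfolding a_def[symmetric] by (simp add: field_simps)
  finally show ?thesis
    unfolding a_def .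
qed

lemma prob_extension:
  assumes "v \<in> V" "x \<in> L v"
  shows "measure_pmf.prob extension_pmf {I. x \<in> I} = 1 / real (card (L v))"
  using assms prob_extension_outer prob_extension_interior prob_extension_boundary
  by (cases "v \<in> T"; cases "v \<in> boundary") auto

lemma extension_frac_packing: "frac_packing V L VH EH"
  unfolding frac_packing_def using extension_transversal prob_extension by blast

end

lemma (in boundary_setting) frac_packing_from_reduced:
  assumes outer: "frac_packing (V - T) L (restr_VH V L VH (V - T)) (restr_EH V L VH EH (V - T))"
    and reduced: "\<And>C. \<forall>u\<in>boundary. C u \<in> L u \<Longrightarrow>
                    frac_packing T (reduced_lists C) (reduced_VH C) (reduced_EH C)"
  shows "frac_packing V L VH EH"
proof -
  obtain p0 where p0: "set_pmf p0 \<subseteq>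
      {I. indep_transversal (V - T) L (restr_VH V L VH (V - T)) (restr_EH V L VH EH (V - T)) I}"
    "\<forall>v\<in>V - T. \<forall>x\<in>L v. measure_pmf.prob p0 {I. x \<in> I} = 1 / real (card (L v))"
    using outer unfolding frac_packing_def by blast
  have "\<forall>C. \<exists>q. (\<forall>u\<in>boundary. C u \<in> L u) \<longrightarrow>
      set_pmf q \<subseteq> {J. indep_transversal T (reduced_lists C) (reduced_VH C) (reduced_EH C) J} \<and>
      (\<forall>u\<in>T. \<forall>x\<in>reduced_lists C u. measure_pmf.prob q {J. x \<in> J} = 1 / real (card (reduced_lists C u)))"
    using reduced unfolding frac_packing_def by blast
  then obtain q where q: "\<And>C. \<forall>u\<in>boundary. C u \<in> L u \<Longrightarrow>
      set_pmf (q C) \<subseteq> {J. indep_transversal T (reduced_lists C) (reduced_VH C) (reduced_EH C) J} \<and>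
      (\<forall>u\<in>T. \<forall>x\<in>reduced_lists C u. measure_pmf.prob (q C) {J. x \<in> J} = 1 / real (card (reduced_lists C u)))"
    by metis
  interpret boundary_extension V E L VH EH T p0 q
    using p0 q by unfold_locales blast+
  show ?thesis
    by (rule extension_frac_packing)
qed

theorem mainTheorem11:
  fixes V :: "'v set" and E :: "'v \<Rightarrow> 'v \<Rightarrow> bool"
    and L :: "'v \<Rightarrow> 'c set" and VH :: "'c set" and EH :: "'c \<Rightarrow> 'c \<Rightarrow> bool"
    and T :: "'v set"
  assumes G: "simple_graph V E"
    and cover: "corr_cover V E L VH EH"
    and TV: "T \<subseteq> V"
    and i: "\<forall>u\<in>T. card {v \<in> V - T. E u v} \<le> 1"
    and ii: "\<forall>u\<in>T. \<forall>v\<in>V - T. E u v \<longrightarrow> 2 \<le> card (L u) \<and> card (L u) \<le> card (L v)"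
    and iii: "frac_packing (V - T) L (restr_VH V L VH (V - T)) (restr_EH V L VH EH (V - T))"
    and iv: "\<forall>(LT :: 'v \<Rightarrow> nat set) VHT EHT.
               corr_cover T (induced_edges E T) LT VHT EHT \<and>
               (\<forall>u\<in>T. (\<not> (\<exists>v\<in>V - T. E u v)) \<longrightarrow> card (LT u) = card (L u)) \<and>
               (\<forall>u\<in>T. (\<exists>v\<in>V - T. E u v) \<longrightarrow> card (LT u) = card (L u) - 1)
               \<longrightarrow> frac_packing T LT VHT EHT"
  shows "frac_packing V L VH EH"
proof -
  interpret boundary_setting V E L VH EH T
    using G cover TV i ii by unfold_locales
  have "frac_packing T (reduced_lists C) (reduced_VH C) (reduced_EH C)"
    if C: "\<forall>u\<in>boundary. C u \<in> L u" for C
  proof (rule frac_packing_by_nat_encoding[OF corr_cover_reduced])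
    fix LT :: "'v \<Rightarrow> nat set" and VHT EHT
    assume cover_T: "corr_cover T (induced_edges E T) LT VHT EHT"
      and sizes: "\<forall>u\<in>T. card (LT u) = card (reduced_lists C u)"
    have "\<forall>u\<in>T. card (LT u) = (if \<exists>v\<in>V - T. E u v then card (L u) - 1 else card (L u))"
      using sizes card_reduced_lists C unfolding boundary_def by simp
    then show "frac_packing T LT VHT EHT"
      using iv cover_T by simp
  qed
  then show ?thesis
    using frac_packing_from_reduced[OF iii] by blast
qed

end
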